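(* Let $\mathcal{D}$ be an algebra and vector lattice of bounded real functions with the Stone property, and $(\mathcal{E},\mathcal{D})$ a bilinear form on which the unit contraction operates, with killing functional $K$. Then $K(f^2)\le\mathcal{E}(f)$ for all $f\in\mathcal{D}_0$, and $\mathcal{Q}(f,g):=\mathcal{E}(f,g)-K(fg)$, $f,g\in\mathcal{D}_0$, defines a bilinear form $(\mathcal{Q},\mathcal{D}_0)$ on which the unit contraction operates and which has zero killing.
   Context: Stone property: $f\wedge1\in\mathcal{D}$ for $f\in\mathcal{D}$. Unit contraction $T_1(x)=\max(x,0)\wedge1$; operates on $(\mathcal{E},\mathcal{D})$ if $\mathcal{E}(T_1(f))\le\mathcal{E}(f)$. Bilinear form: symmetric nonnegative definite bilinear map, $\mathcal{E}(f)=\mathcal{E}(f,f)$. For $f\ge0$ in $\mathcal{D}$, $E_f:=\{\varphi\in\mathcal{D}:\mathbf 1_{\{f>0\}}\le\varphi\le\mathbf 1\}$; $\mathcal{D}_0^+:=\{f\in\mathcal{D},f\ge0: E_f\ne\emptyset\}$, $\mathcal{D}_0$ its linear span (an ideal of $\mathcal{D}$, so $fg\in\mathcal{D}_0$ for $f,g\in\mathcal{D}_0$). Killing functional: $K(f):=\inf\{\mathcal{E}(f,\varphi):\varphi\in E_f\}$ for $f\in\mathcal{D}_0^+$, extended to $\mathcal{D}_0$ by $K(f)=K(f^+)-K(f^-)$. A form $(\mathcal{Q},\mathcal{D}_0)$ has zero killing if its killing functional (defined by the same recipe with $\mathcal{Q},\mathcal{D}_0$ in place of $\mathcal{E},\mathcal{D}$)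 vanishes identically. *)

theory Defs
  imports Complex_Main
begin

definition algebra_vector_lattice :: "('x \<Rightarrow> real) set \<Rightarrow> bool" where
  "algebra_vector_lattice D \<longleftrightarrow>
     (\<lambda>x. 0) \<in> D \<and>
     (\<forall>f\<in>D. \<forall>g\<in>D. (\<lambda>x. f x + g x) \<in> D) \<and>
     (\<forall>f\<in>D. \<forall>c::real. (\<lambda>x. c * f x) \<in> D) \<and>
     (\<forall>f\<in>D. \<forall>g\<in>D. (\<lambda>x. f x * g x) \<in> D) \<and>
     (\<forall>f\<in>D. \<forall>g\<in>D. (\<lambda>x. max (f x) (g x)) \<in> D) \<and>
     (\<forall>f\<in>D. \<forall>g\<in>D. (\<lambda>x. min (f x) (g x)) \<in> D)"

definition bounded_functions :: "('x \<Rightarrow> real) set \<Rightarrow> bool" where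
  "bounded_functions D \<longleftrightarrow> (\<forall>f\<in>D. \<exists>C. \<forall>x. \<bar>f x\<bar> \<le> C)"

definition stone_property :: "('x \<Rightarrow> real) set \<Rightarrow> bool" where
  "stone_property D \<longleftrightarrow> (\<forall>f\<in>D. (\<lambda>x. min (f x) 1) \<in> D)"

definition bilinear_form :: "('x \<Rightarrow> real) set \<Rightarrow> (('x \<Rightarrow> real) \<Rightarrow> ('x \<Rightarrow> real) \<Rightarrow> real) \<Rightarrow> bool" where
  "bilinear_form D E \<longleftrightarrow>
     (\<forall>f\<in>D. \<forall>g\<in>D. \<forall>h\<in>D. E (\<lambda>x. f x + g x) h = E f h + E g h) \<and>
     (\<forall>f\<in>D. \<forall>g\<in>D. \<forall>c::real. E (\<lambda>x. c * f x) g = c * E f g) \<and>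
     (\<forall>f\<in>D. \<forall>g\<in>D. E f g = E g f) \<and>
     (\<forall>f\<in>D. 0 \<le> E f f)"

definition T1 :: "real \<Rightarrow> real" where
  "T1 t = min (max t 0) 1"

definition unit_contraction_operates :: "('x \<Rightarrow> real) set \<Rightarrow> (('x \<Rightarrow> real) \<Rightarrow> ('x \<Rightarrow> real) \<Rightarrow> real) \<Rightarrow> bool" where
  "unit_contraction_operates D E \<longleftrightarrow>
     (\<forall>f\<in>D. (\<lambda>x. T1 (f x)) \<in> D \<and> E (\<lambda>x. T1 (f x)) (\<lambda>x. T1 (f x)) \<le> E f f)"

definition Eset :: "('x \<Rightarrow> real) set \<Rightarrow> ('x \<Rightarrow> real) \<Rightarrow> ('x \<Rightarrow> real) set" where
  "Eset D f = {\<phi>\<in>D. \<forall>x. (if f x > 0 then 1 else 0) \<le> \<phi> x \<and> \<phi> x \<le> 1}"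

definition D0plus :: "('x \<Rightarrow> real) set \<Rightarrow> ('x \<Rightarrow> real) set" where
  "D0plus D = {f\<in>D. (\<forall>x. 0 \<le> f x) \<and> Eset D f \<noteq> {}}"

definition D0 :: "('x \<Rightarrow> real) set \<Rightarrow> ('x \<Rightarrow> real) set" where
  "D0 D = {f. \<exists>(n::nat) (c::nat \<Rightarrow> real) g. (\<forall>i<n. g i \<in> D0plus D) \<and>
                f = (\<lambda>x. \<Sum>i<n. c i * g i x)}"

definition killing_plus :: "('x \<Rightarrow> real) set \<Rightarrow> (('x \<Rightarrow> real) \<Rightarrow> ('x \<Rightarrow> real) \<Rightarrow> real) \<Rightarrow> ('x \<Rightarrow> real) \<Rightarrow> real" where
  "killing_plus D E f = Inf ((\<lambda>\<phi>. E f \<phi>) ` Eset D f)"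

definition killing :: "('x \<Rightarrow> real) set \<Rightarrow> (('x \<Rightarrow> real) \<Rightarrow> ('x \<Rightarrow> real) \<Rightarrow> real) \<Rightarrow> ('x \<Rightarrow> real) \<Rightarrow> real" where
  "killing D E f = killing_plus D E (\<lambda>x. max (f x) 0) - killing_plus D E (\<lambda>x. max (- f x) 0)"

end

theory Submission
  imports Defs
begin

(* All arguments are pointwise manipulations of functions in D, combined with one analytic
   principle: if a real quadratic s \<mapsto> 2 s a + s\<^sup>2 b is nonnegative for all s > 0, then a \<ge> 0.
   Applying the unit contraction to perturbations h \<pm> s g that it leaves unchanged yields
   Markov-type sign conditions: E(h,g) \<le> 0 for disjointly supported h, g \<ge> 0, and
   E(f,\<phi>) \<ge> 0, antitone in \<phi>, for cut-offs \<phi> of f \<ge> 0.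
   From these, the killing functional K is additive, positively homogeneous and monotone on
   D0plus, hence linear on D0; D0 itself is identified with the set of f \<in> D for which |f|
   admits a cut-off.  The inequality K(f\<^sup>2) \<le> E(f) is proved for f \<ge> 0 by slicing f into
   layers of height \<delta> (induction on the number of layers) and letting \<delta> \<rightarrow> 0; for general f
   one passes to |f|.  Finally Q = E - K(\<cdot>\<cdot>) is bilinear and nonnegative by the inequality,
   the unit contraction operates on Q by the decomposition f = T1 f + (f\<^sup>+ - T1 f) - f\<^sup>-, and
   Q has zero killing because cut-offs within D0 can approximate the infimum defining K. *)

text \<open>If \<open>2 s a + s\<^sup>2 b \<ge> 0\<close> for all \<open>s > 0\<close>, then \<open>a \<ge> 0\<close>: the first-order term dominates for
  small \<open>s\<close>.  This turns contraction inequalities into sign conditions on \<open>E\<close>.\<close>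
lemma nonneg_of_quadratic_nonneg:
  fixes a b :: real
  assumes "\<And>s. s > 0 \<Longrightarrow> 0 \<le> 2*s*a + s^2*b"
  shows "0 \<le> a"
proof (rule ccontr)
  assume "\<not> 0 \<le> a" hence a: "a < 0" by simp
  show False
  proof (cases "b \<le> 0")
    case True
    have "0 \<le> 2*1*a + 1^2*b" using assms[of 1] by simp
    thus False using a True by simp
  next
    case False
    have s: "-a/b > 0" using a False by (simp add: divide_neg_pos)
    have "0 \<le> 2*(-a/b)*a + (-a/b)^2*b" using assms[OF s] by simp
    also have "2*(-a/b)*a + (-a/b)^2*b = - (a^2/b)"
      using False by (simp add: power2_eq_square field_simps)
    finally show False using a False by (smt (verit) divide_pos_pos zero_less_power2)
  qed
qed

lemma le_of_le_plus_multiple: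
  fixes x y c :: real
  assumes "\<And>\<delta>. \<delta> > 0 \<Longrightarrow> x \<le> y + \<delta> * c"
  shows "x \<le> y"
proof (rule ccontr)
  assume "\<not> x \<le> y"
  define \<delta> where "\<delta> = (x - y) / (2 * (\<bar>c\<bar> + 1))"
  have pos: "\<delta> > 0" using \<open>\<not> x \<le> y\<close> by (simp add: \<delta>_def)
  have "\<delta> * c \<le> \<delta> * \<bar>c\<bar>" using pos by (simp add: mult_left_mono)
  also have "\<delta> * \<bar>c\<bar> < \<delta> * (\<bar>c\<bar> + 1)" using pos by simp
  also have "\<delta> * (\<bar>c\<bar> + 1) = (x - y) / 2" by (simp add: \<delta>_def field_simps)
  finally show False using assms[OF pos] \<open>\<not> x \<le> y\<close> by simp
qed

lemma linear_combination_closed: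
  fixes S :: "('x \<Rightarrow> real) set" and n :: nat
  assumes "(\<lambda>x. 0) \<in> S" "\<And>f g. f \<in> S \<Longrightarrow> g \<in> S \<Longrightarrow> (\<lambda>x. f x + g x) \<in> S"
    "\<And>f c. f \<in> S \<Longrightarrow> (\<lambda>x. c * f x) \<in> S" "\<forall>i<n. g i \<in> S"
  shows "(\<lambda>x. \<Sum>i<n. c i * g i x) \<in> S"
  using assms(4)
proof (induction n)
  case 0 thus ?case using assms(1) by simp
next
  case (Suc n)
  have "(\<lambda>x. (\<Sum>i<n. c i * g i x) + c n * g n x) \<in> S"
    using Suc by (intro assms(2,3)) auto
  thus ?case by simp
qed

locale contraction_form =
  fixes D :: "('x \<Rightarrow> real) set" and E :: "('x \<Rightarrow> real) \<Rightarrow> ('x \<Rightarrow> real) \<Rightarrow> real"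
  assumes lattice_algebra: "algebra_vector_lattice D"
    and bounded: "bounded_functions D"
    and stone: "stone_property D"
    and bilinear: "bilinear_form D E"
    and contraction: "unit_contraction_operates D E"
begin

lemma zero_in: "(\<lambda>x. 0) \<in> D"
  using lattice_algebra unfolding algebra_vector_lattice_def by blast
lemma add_in: "f \<in> D \<Longrightarrow> g \<in> D \<Longrightarrow> (\<lambda>x. f x + g x) \<in> D"
  using lattice_algebra unfolding algebra_vector_lattice_def by blast
lemma scale_in: "f \<in> D \<Longrightarrow> (\<lambda>x. c * f x) \<in> D"
  using lattice_algebra unfolding algebra_vector_lattice_def by blast
lemma mult_in: "f \<in> D \<Longrightarrow> g \<in> D \<Longrightarrow> (\<lambda>x. f x * g x) \<in> D"
  using lattice_algebra unfolding algebra_vector_lattice_def by blast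
lemma max_in: "f \<in> D \<Longrightarrow> g \<in> D \<Longrightarrow> (\<lambda>x. max (f x) (g x)) \<in> D"
  using lattice_algebra unfolding algebra_vector_lattice_def by blast
lemma stone_in: "f \<in> D \<Longrightarrow> (\<lambda>x. min (f x) 1) \<in> D"
  using stone unfolding stone_property_def by blast
lemma bounded_fun: "f \<in> D \<Longrightarrow> \<exists>C. \<forall>x. \<bar>f x\<bar> \<le> C"
  using bounded unfolding bounded_functions_def by blast
lemma T1_in: "f \<in> D \<Longrightarrow> (\<lambda>x. T1 (f x)) \<in> D"
  using contraction unfolding unit_contraction_operates_def by blast
lemma E_T1_le: "f \<in> D \<Longrightarrow> E (\<lambda>x. T1 (f x)) (\<lambda>x. T1 (f x)) \<le> E f f"
  using contraction unfolding unit_contraction_operates_def by blast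

lemma diff_in: "f \<in> D \<Longrightarrow> g \<in> D \<Longrightarrow> (\<lambda>x. f x - g x) \<in> D"
  using add_in[of f "\<lambda>x. (-1) * g x"] scale_in[of g "-1"] by simp
lemma pos_part_in: "f \<in> D \<Longrightarrow> (\<lambda>x. max (f x) 0) \<in> D"
  using max_in[OF _ zero_in] by blast
lemma neg_part_in: "f \<in> D \<Longrightarrow> (\<lambda>x. max (- f x) 0) \<in> D"
  using pos_part_in[OF scale_in[of f "-1"]] by simp
lemma abs_in:
  assumes f: "f \<in> D"
  shows "(\<lambda>x. \<bar>f x\<bar>) \<in> D"
proof -
  have "(\<lambda>x. max (f x) ((-1) * f x)) \<in> D" using max_in[OF f scale_in[OF f]] .
  moreover have "(\<lambda>x. max (f x) ((-1) * f x)) = (\<lambda>x. \<bar>f x\<bar>)" by (rule ext) auto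
  ultimately show ?thesis by simp
qed
lemma square_in: "f \<in> D \<Longrightarrow> (\<lambda>x. (f x)^2) \<in> D"
  using mult_in[of f f] by (simp add: power2_eq_square)

lemma min_const_in:
  assumes f: "f \<in> D" and t: "t > 0"
  shows "(\<lambda>x. min (f x) t) \<in> D"
proof -
  have "(\<lambda>x. t * min ((1/t) * f x) 1) \<in> D" by (intro scale_in stone_in f)
  moreover have "(\<lambda>x. t * min ((1/t) * f x) 1) = (\<lambda>x. min (f x) t)"
    using t by (auto simp: min_def field_simps)
  ultimately show ?thesis by simp
qed

lemma E_add: "f \<in> D \<Longrightarrow> g \<in> D \<Longrightarrow> h \<in> D \<Longrightarrow> E (\<lambda>x. f x + g x) h = E f h + E g h"
  using bilinear unfolding bilinear_form_def by blast
lemma E_scale: "f \<in> D \<Longrightarrow> g \<in> D \<Longrightarrow> E (\<lambda>x. c * f x) g = c * E f g"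
  using bilinear unfolding bilinear_form_def by blast
lemma E_sym: "f \<in> D \<Longrightarrow> g \<in> D \<Longrightarrow> E f g = E g f"
  using bilinear unfolding bilinear_form_def by blast
lemma E_nonneg: "f \<in> D \<Longrightarrow> 0 \<le> E f f"
  using bilinear unfolding bilinear_form_def by blast
lemma E_add_right: "f \<in> D \<Longrightarrow> g \<in> D \<Longrightarrow> h \<in> D \<Longrightarrow> E h (\<lambda>x. f x + g x) = E h f + E h g"
  by (simp add: E_sym[of h] add_in E_add)
lemma E_scale_right: "f \<in> D \<Longrightarrow> g \<in> D \<Longrightarrow> E g (\<lambda>x. c * f x) = c * E g f"
  by (simp add: E_sym[of g] scale_in E_scale)
lemma E_diff: "f \<in> D \<Longrightarrow> g \<in> D \<Longrightarrow> h \<in> D \<Longrightarrow> E (\<lambda>x. f x - g x) h = E f h - E g h"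
  using E_add[of f "\<lambda>x. (-1) * g x" h] E_scale[of g h "-1"] scale_in[of g "-1"] by simp
lemma E_diff_right: "f \<in> D \<Longrightarrow> g \<in> D \<Longrightarrow> h \<in> D \<Longrightarrow> E h (\<lambda>x. f x - g x) = E h f - E h g"
  by (simp add: E_sym[of h] diff_in E_diff)
lemma E_zero: "g \<in> D \<Longrightarrow> E (\<lambda>x. 0) g = 0"
  using E_scale[OF zero_in, of g 0] by simp

lemma E_expand:
  assumes u: "u \<in> D" and v: "v \<in> D"
  shows "E (\<lambda>x. u x + s * v x) (\<lambda>x. u x + s * v x) = E u u + 2*s*E u v + s^2 * E v v"
proof -
  have sv: "(\<lambda>x. s * v x) \<in> D" using v by (rule scale_in)
  have w: "(\<lambda>x. u x + s * v x) \<in> D" using u sv by (rule add_in)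
  have "E (\<lambda>x. u x + s * v x) (\<lambda>x. u x + s * v x)
      = E u (\<lambda>x. u x + s * v x) + s * E v (\<lambda>x. u x + s * v x)"
    using E_add[OF u sv w] E_scale[OF v w] by simp
  also have "\<dots> = E u u + s * E u v + s * (E v u + s * E v v)"
    using E_add_right[OF u sv u] E_add_right[OF u sv v] E_scale_right[OF v u] E_scale_right[OF v v]
    by simp
  also have "\<dots> = E u u + 2*s*E u v + s^2 * E v v"
    using E_sym[OF u v] by (simp add: power2_eq_square algebra_simps)
  finally show ?thesis .
qed

lemma E_expand3:
  assumes a: "a \<in> D" and b: "b \<in> D" and n: "n \<in> D"
  shows "E (\<lambda>x. a x + (b x - n x)) (\<lambda>x. a x + (b x - n x))
    = E a a + 2 * (E a b - E a n) + (E b b - 2 * E b n + E n n)"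
proof -
  define w where "w = (\<lambda>x. b x + (-1) * n x)"
  have wD: "w \<in> D" unfolding w_def using b scale_in[OF n] by (rule add_in)
  have "(\<lambda>x. a x + (b x - n x)) = (\<lambda>x. a x + 1 * w x)" by (simp add: w_def)
  hence "E (\<lambda>x. a x + (b x - n x)) (\<lambda>x. a x + (b x - n x)) = E a a + 2*1*E a w + 1^2 * E w w"
    using E_expand[OF a wD, of 1] by simp
  moreover have "E a w = E a b - E a n"
    unfolding w_def using E_add_right[OF b scale_in[OF n, of "-1"] a] E_scale_right[OF n a, of "-1"] by simp
  moreover have "E w w = E b b + 2*(-1)*E b n + (-1)^2 * E n n"
    unfolding w_def by (rule E_expand[OF b n])
  ultimately show ?thesis by simp
qed

lemma cutoffI:
  "\<phi> \<in> D \<Longrightarrow> (\<And>x. 0 \<le> \<phi> x) \<Longrightarrow> (\<And>x. \<phi> x \<le> 1) \<Longrightarrow> (\<And>x. f x > 0 \<Longrightarrow> \<phi> x = 1)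
    \<Longrightarrow> \<phi> \<in> Eset D f"
  unfolding Eset_def by auto

lemma cutoffD:
  assumes "\<phi> \<in> Eset D f"
  shows "\<phi> \<in> D" "0 \<le> \<phi> x" "\<phi> x \<le> 1" "f x > 0 \<Longrightarrow> \<phi> x = 1"
  using assms unfolding Eset_def by (auto dest!: spec[of _ x] split: if_splits)

lemma cutoff_antimono: "(\<And>x. f x > 0 \<Longrightarrow> g x > 0) \<Longrightarrow> Eset D g \<subseteq> Eset D f"
  by (auto intro!: cutoffI dest: cutoffD)

lemma cutoff_max:
  assumes p: "\<phi> \<in> Eset D f" and q: "\<psi> \<in> Eset D g"
    and f0: "\<And>x. 0 \<le> f x" and g0: "\<And>x. 0 \<le> g x"
  shows "(\<lambda>x. max (\<phi> x) (\<psi> x)) \<in> Eset D (\<lambda>x. f x + g x)"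
proof (rule cutoffI)
  show "(\<lambda>x. max (\<phi> x) (\<psi> x)) \<in> D" using cutoffD(1)[OF p] cutoffD(1)[OF q] by (rule max_in)
  fix x
  show "0 \<le> max (\<phi> x) (\<psi> x)" using cutoffD(2)[OF p, of x] by simp
  show "max (\<phi> x) (\<psi> x) \<le> 1" using cutoffD(3)[OF p, of x] cutoffD(3)[OF q, of x] by simp
  assume "f x + g x > 0"
  hence "f x > 0 \<or> g x > 0" using f0[of x] g0[of x] by linarith
  thus "max (\<phi> x) (\<psi> x) = 1"
    using cutoffD(3,4)[OF p, of x] cutoffD(3,4)[OF q, of x] by (auto simp: max_def)
qed

subsection \<open>Sign conditions from the unit contraction\<close>

text \<open>Disjointly supported \<open>0 \<le> h \<le> 1\<close> and \<open>g \<ge> 0\<close> satisfy \<open>E(h,g) \<le> 0\<close>, because the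
  contraction maps \<open>h - s g\<close> back to \<open>h\<close>.\<close>
lemma E_disjoint_unit:
  assumes h: "h \<in> D" and g: "g \<in> D" and h01: "\<And>x. 0 \<le> h x \<and> h x \<le> 1" and g0: "\<And>x. 0 \<le> g x"
    and disjoint: "\<And>x. g x > 0 \<Longrightarrow> h x = 0"
  shows "E h g \<le> 0"
proof -
  have "0 \<le> 2*s*(- E h g) + s^2 * E g g" if s: "s > 0" for s
  proof -
    have "(\<lambda>x. T1 (h x + (-s) * g x)) = h"
    proof
      fix x show "T1 (h x + (-s) * g x) = h x"
        using h01[of x] g0[of x] disjoint[of x] s
        by (cases "g x > 0") (auto simp: T1_def mult_pos_pos)
    qed
    hence "E h h \<le> E (\<lambda>x. h x + (-s) * g x) (\<lambda>x. h x + (-s) * g x)"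
      using E_T1_le[OF add_in[OF h scale_in[OF g]], of "-s"] by simp
    thus ?thesis unfolding E_expand[OF h g] by simp
  qed
  from nonneg_of_quadratic_nonneg[OF this] show ?thesis by simp
qed

text \<open>The same for arbitrary disjointly supported \<open>h, g \<ge> 0\<close>, rescaling \<open>h\<close> by its bound.\<close>
lemma E_disjoint:
  assumes h: "h \<in> D" and g: "g \<in> D" and h0: "\<And>x. 0 \<le> h x" and g0: "\<And>x. 0 \<le> g x"
    and disjoint: "\<And>x. g x > 0 \<Longrightarrow> h x = 0"
  shows "E h g \<le> 0"
proof -
  obtain C where C: "\<And>x. \<bar>h x\<bar> \<le> C" using bounded_fun[OF h] by blast
  define M where "M = C + 1"
  have "0 \<le> C" using C[of undefined] by linarith
  hence M: "M > 0" "\<And>x. h x \<le> M" using C by (auto simp: M_def abs_le_iff intro: add_increasing2)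
  have "E (\<lambda>x. (1/M) * h x) g \<le> 0"
  proof (rule E_disjoint_unit[OF scale_in[OF h] g _ g0])
    show "0 \<le> 1 / M * h x \<and> 1 / M * h x \<le> 1" for x using M h0[of x] by (auto simp: field_simps)
    show "g x > 0 \<Longrightarrow> 1 / M * h x = 0" for x using disjoint by simp
  qed
  thus ?thesis using E_scale[OF h g, of "1/M"] M by (simp add: divide_le_0_iff)
qed

text \<open>\<open>E(f,\<phi>) \<ge> 0\<close> for a cut-off \<phi> of \<open>f \<ge> 0\<close>: the contraction maps \<open>\<phi> + s f\<close> back to \<open>\<phi>\<close>.\<close>
lemma E_cutoff_nonneg:
  assumes f: "f \<in> D" and f0: "\<And>x. 0 \<le> f x" and p: "\<phi> \<in> Eset D f"
  shows "0 \<le> E f \<phi>"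
proof -
  note cut = cutoffD[OF p]
  have "0 \<le> 2*s*(E \<phi> f) + s^2 * E f f" if s: "s > 0" for s
  proof -
    have "(\<lambda>x. T1 (\<phi> x + s * f x)) = \<phi>"
    proof
      fix x show "T1 (\<phi> x + s * f x) = \<phi> x"
        using cut(2-4)[of x] f0[of x] s by (cases "f x > 0") (auto simp: T1_def mult_pos_pos)
    qed
    hence "E \<phi> \<phi> \<le> E (\<lambda>x. \<phi> x + s * f x) (\<lambda>x. \<phi> x + s * f x)"
      using E_T1_le[OF add_in[OF cut(1) scale_in[OF f]], of s] by simp
    thus ?thesis unfolding E_expand[OF cut(1) f] by simp
  qed
  from nonneg_of_quadratic_nonneg[OF this] show ?thesis using E_sym[OF f cut(1)] by simp
qed

lemma E_cutoff_antimono: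
  assumes f: "f \<in> D" and f0: "\<And>x. 0 \<le> f x" and p: "\<phi> \<in> Eset D f" and q: "\<chi> \<in> Eset D f"
    and le: "\<And>x. \<phi> x \<le> \<chi> x"
  shows "E f \<chi> \<le> E f \<phi>"
proof -
  note p' = cutoffD[OF p] and q' = cutoffD[OF q]
  have "E (\<lambda>x. \<chi> x - \<phi> x) f \<le> 0"
  proof (rule E_disjoint_unit[OF diff_in[OF q'(1) p'(1)] f _ f0])
    show "0 \<le> \<chi> x - \<phi> x \<and> \<chi> x - \<phi> x \<le> 1" for x using le[of x] p'(2)[of x] q'(3)[of x] by simp
    show "f x > 0 \<Longrightarrow> \<chi> x - \<phi> x = 0" for x using p'(4)[of x] q'(4)[of x] by simp
  qed
  thus ?thesis using E_diff[OF q'(1) p'(1) f] E_sym[OF f p'(1)] E_sym[OF f q'(1)] by simp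
qed

text \<open>Passing to the modulus does not increase the energy, as \<open>E(f\<^sup>+,f\<^sup>-) \<le> 0\<close>.\<close>
lemma E_abs_le:
  assumes f: "f \<in> D"
  shows "E (\<lambda>x. \<bar>f x\<bar>) (\<lambda>x. \<bar>f x\<bar>) \<le> E f f"
proof -
  define p where "p = (\<lambda>x. max (f x) 0)"
  define n where "n = (\<lambda>x. max (- f x) 0)"
  have pD: "p \<in> D" and nD: "n \<in> D" unfolding p_def n_def using pos_part_in[OF f] neg_part_in[OF f] by auto
  have "E p n \<le> 0" using pD nD by (rule E_disjoint) (auto simp: p_def n_def max_def split: if_splits)
  moreover have "(\<lambda>x. \<bar>f x\<bar>) = (\<lambda>x. p x + 1 * n x)" by (auto intro!: ext simp: p_def n_def max_def)
  moreover have "f = (\<lambda>x. p x + (-1) * n x)" by (auto intro!: ext simp: p_def n_def max_def)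
  ultimately show ?thesis using E_expand[OF pD nD, of 1] E_expand[OF pD nD, of "-1"] by simp
qed

subsection \<open>The killing functional on nonnegative functions\<close>

text \<open>\<open>Kp f\<close> is the infimum of \<open>E(f,\<phi>)\<close> over cut-offs \<open>\<phi>\<close> of \<open>f\<close>; on \<open>D0plus\<close> it is a
  nonnegative infimum of a nonempty set.\<close>
abbreviation "Kp \<equiv> killing_plus D E"

lemma D0plusI: "f \<in> D \<Longrightarrow> (\<And>x. 0 \<le> f x) \<Longrightarrow> \<phi> \<in> Eset D f \<Longrightarrow> f \<in> D0plus D"
  unfolding D0plus_def by auto
lemma D0plusD: assumes "f \<in> D0plus D" shows "f \<in> D" "0 \<le> f x" "Eset D f \<noteq> {}"
  using assms unfolding D0plus_def by auto

lemma Kp_le: "f \<in> D \<Longrightarrow> (\<And>x. 0 \<le> f x) \<Longrightarrow> \<phi> \<in> Eset D f \<Longrightarrow> Kp f \<le> E f \<phi>"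
  unfolding killing_plus_def
  by (rule cInf_lower) (auto simp: bdd_below_def intro!: exI[of _ 0] E_cutoff_nonneg)

lemma Kp_greatest: "Eset D f \<noteq> {} \<Longrightarrow> (\<And>\<phi>. \<phi> \<in> Eset D f \<Longrightarrow> c \<le> E f \<phi>) \<Longrightarrow> c \<le> Kp f"
  unfolding killing_plus_def by (rule cInf_greatest) auto

lemma Kp_approx:
  assumes "Eset D f \<noteq> {}" "\<eta> > 0"
  shows "\<exists>\<psi>\<in>Eset D f. E f \<psi> < Kp f + \<eta>"
proof (rule ccontr)
  assume "\<not> ?thesis"
  hence "Kp f + \<eta> \<le> Kp f" by (intro Kp_greatest[OF assms(1)]) auto
  thus False using assms(2) by simp
qed

lemma Kp_nonneg: "f \<in> D0plus D \<Longrightarrow> 0 \<le> Kp f"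
  by (rule Kp_greatest) (auto dest: D0plusD intro: E_cutoff_nonneg)

lemma zero_cutoff: "(\<lambda>x. 0) \<in> Eset D (\<lambda>x. 0)"
  by (rule cutoffI[OF zero_in]) auto

lemma Kp_zero: "Kp (\<lambda>x. 0) = 0"
proof (rule antisym)
  show "Kp (\<lambda>x. 0) \<le> 0" using Kp_le[OF zero_in _ zero_cutoff] E_zero[OF zero_in] by simp
  show "0 \<le> Kp (\<lambda>x. 0)" using zero_cutoff by (intro Kp_greatest) (auto simp: E_zero dest: cutoffD)
qed

lemma D0plus_add:
  assumes f: "f \<in> D0plus D" and g: "g \<in> D0plus D"
  shows "(\<lambda>x. f x + g x) \<in> D0plus D"
proof -
  obtain \<phi> \<psi> where "\<phi> \<in> Eset D f" "\<psi> \<in> Eset D g" using D0plusD(3)[OF f] D0plusD(3)[OF g] by blast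
  hence "(\<lambda>x. max (\<phi> x) (\<psi> x)) \<in> Eset D (\<lambda>x. f x + g x)"
    using D0plusD(2)[OF f] D0plusD(2)[OF g] by (intro cutoff_max)
  thus ?thesis using D0plusD[OF f] D0plusD[OF g] by (intro D0plusI add_in) (auto intro: add_nonneg_nonneg)
qed

text \<open>The easy half of additivity: a common cut-off of \<open>f + g\<close> is a cut-off of both.\<close>
lemma Kp_superadditive:
  assumes f: "f \<in> D0plus D" and g: "g \<in> D0plus D"
  shows "Kp f + Kp g \<le> Kp (\<lambda>x. f x + g x)"
proof (rule Kp_greatest)
  show "Eset D (\<lambda>x. f x + g x) \<noteq> {}" using D0plusD(3)[OF D0plus_add[OF f g]] .
  fix \<chi> assume c: "\<chi> \<in> Eset D (\<lambda>x. f x + g x)"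
  have "\<chi> \<in> Eset D f" "\<chi> \<in> Eset D g"
    using c cutoff_antimono[of f "\<lambda>x. f x + g x"] cutoff_antimono[of g "\<lambda>x. f x + g x"]
      D0plusD(2)[OF f] D0plusD(2)[OF g] by (auto intro: add_pos_nonneg add_nonneg_pos)
  hence "Kp f \<le> E f \<chi>" "Kp g \<le> E g \<chi>" using D0plusD[OF f] D0plusD[OF g] by (auto intro: Kp_le)
  thus "Kp f + Kp g \<le> E (\<lambda>x. f x + g x) \<chi>"
    using E_add[OF D0plusD(1)[OF f] D0plusD(1)[OF g] cutoffD(1)[OF c]] by simp
qed

text \<open>The other half: the maximum of cut-offs \<open>\<phi>, \<psi>\<close> of \<open>f, g\<close> costs at most
  \<open>E(f,\<phi>) + E(g,\<psi>)\<close>, by antitonicity in the cut-off.\<close>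
lemma Kp_le_sum:
  assumes f: "f \<in> D0plus D" and g: "g \<in> D0plus D"
    and p: "\<phi> \<in> Eset D f" and q: "\<psi> \<in> Eset D g"
  shows "Kp (\<lambda>x. f x + g x) \<le> E f \<phi> + E g \<psi>"
proof -
  note f' = D0plusD[OF f] and g' = D0plusD[OF g]
  define \<chi> where "\<chi> = (\<lambda>x. max (\<phi> x) (\<psi> x))"
  have c: "\<chi> \<in> Eset D (\<lambda>x. f x + g x)" unfolding \<chi>_def using p q f'(2) g'(2) by (rule cutoff_max)
  have cf: "\<chi> \<in> Eset D f" and cg: "\<chi> \<in> Eset D g"
    using c cutoff_antimono[of f "\<lambda>x. f x + g x"] cutoff_antimono[of g "\<lambda>x. f x + g x"] f'(2) g'(2)
    by (auto intro: add_pos_nonneg add_nonneg_pos)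
  have "Kp (\<lambda>x. f x + g x) \<le> E (\<lambda>x. f x + g x) \<chi>"
    using c f'(1,2) g'(1,2) by (intro Kp_le add_in add_nonneg_nonneg) auto
  also have "\<dots> = E f \<chi> + E g \<chi>" using E_add[OF f'(1) g'(1) cutoffD(1)[OF c]] .
  also have "E f \<chi> \<le> E f \<phi>" using cf p f' by (intro E_cutoff_antimono) (auto simp: \<chi>_def)
  also have "E g \<chi> \<le> E g \<psi>" using cg q g' by (intro E_cutoff_antimono) (auto simp: \<chi>_def)
  finally show ?thesis by simp
qed

lemma Kp_add:
  assumes f: "f \<in> D0plus D" and g: "g \<in> D0plus D"
  shows "Kp (\<lambda>x. f x + g x) = Kp f + Kp g"
proof (rule antisym)
  have "Kp (\<lambda>x. f x + g x) - E g \<psi> \<le> Kp f" if q: "\<psi> \<in> Eset D g" for \<psi>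
    using Kp_le_sum[OF f g _ q] by (intro Kp_greatest[OF D0plusD(3)[OF f]]) (simp add: algebra_simps)
  hence "Kp (\<lambda>x. f x + g x) - Kp f \<le> Kp g"
    by (intro Kp_greatest[OF D0plusD(3)[OF g]]) (simp add: algebra_simps)
  thus "Kp (\<lambda>x. f x + g x) \<le> Kp f + Kp g" by simp
qed (rule Kp_superadditive[OF f g])

lemma D0plus_scale:
  assumes f: "f \<in> D0plus D" and c: "c \<ge> 0"
  shows "(\<lambda>x. c * f x) \<in> D0plus D"
proof -
  obtain \<phi> where "\<phi> \<in> Eset D f" using D0plusD(3)[OF f] by blast
  moreover have "Eset D f \<subseteq> Eset D (\<lambda>x. c * f x)"
    by (rule cutoff_antimono) (use c in \<open>auto simp: zero_less_mult_iff\<close>)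
  ultimately show ?thesis using D0plusD[OF f] c by (intro D0plusI scale_in) auto
qed

lemma Kp_scale:
  assumes f: "f \<in> D0plus D" and c: "c \<ge> 0"
  shows "Kp (\<lambda>x. c * f x) = c * Kp f"
proof (cases "c = 0")
  case True thus ?thesis using Kp_zero by simp
next
  case False
  hence c: "c > 0" using c by simp
  note f' = D0plusD[OF f]
  have same_cutoffs: "Eset D (\<lambda>x. c * f x) = Eset D f"
    using cutoff_antimono[of f "\<lambda>x. c * f x"] cutoff_antimono[of "\<lambda>x. c * f x" f] c
    by (auto simp: zero_less_mult_iff)
  have cf: "(\<lambda>x. c * f x) \<in> D" "\<And>x. 0 \<le> c * f x" using scale_in[OF f'(1)] f'(2) c by auto
  show ?thesis
  proof (rule antisym)
    show "c * Kp f \<le> Kp (\<lambda>x. c * f x)"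
    proof (rule Kp_greatest)
      show "Eset D (\<lambda>x. c * f x) \<noteq> {}" using same_cutoffs f'(3) by simp
      fix \<phi> assume "\<phi> \<in> Eset D (\<lambda>x. c * f x)"
      hence p: "\<phi> \<in> Eset D f" using same_cutoffs by simp
      have "Kp f \<le> E f \<phi>" using p f' by (intro Kp_le) auto
      thus "c * Kp f \<le> E (\<lambda>x. c * f x) \<phi>" using E_scale[OF f'(1) cutoffD(1)[OF p]] c by simp
    qed
    have "Kp (\<lambda>x. c * f x) / c \<le> Kp f"
    proof (rule Kp_greatest[OF f'(3)])
      fix \<phi> assume p: "\<phi> \<in> Eset D f"
      have "Kp (\<lambda>x. c * f x) \<le> E (\<lambda>x. c * f x) \<phi>" using p same_cutoffs cf by (intro Kp_le) auto
      thus "Kp (\<lambda>x. c * f x) / c \<le> E f \<phi>"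
        using E_scale[OF f'(1) cutoffD(1)[OF p]] c by (simp add: field_simps)
    qed
    thus "Kp (\<lambda>x. c * f x) \<le> c * Kp f" using c by (simp add: field_simps)
  qed
qed

lemma Kp_mono:
  assumes f: "f \<in> D0plus D" and g: "g \<in> D0plus D" and le: "\<And>x. f x \<le> g x"
  shows "Kp f \<le> Kp g"
proof -
  obtain \<phi> where "\<phi> \<in> Eset D g" using D0plusD(3)[OF g] by blast
  moreover have "Eset D g \<subseteq> Eset D (\<lambda>x. g x - f x)"
    by (rule cutoff_antimono) (metis D0plusD(2)[OF f] add_pos_nonneg diff_add_cancel)
  ultimately have d: "(\<lambda>x. g x - f x) \<in> D0plus D"
    using D0plusD[OF f] D0plusD[OF g] le by (intro D0plusI diff_in) auto
  have "Kp g = Kp (\<lambda>x. f x + (g x - f x))" by simp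
  also have "\<dots> = Kp f + Kp (\<lambda>x. g x - f x)" using Kp_add[OF f d] .
  finally show ?thesis using Kp_nonneg[OF d] by simp
qed

subsection \<open>A description of \<open>D0\<close>\<close>

text \<open>\<open>D0 D\<close> consists exactly of the \<open>f \<in> D\<close> whose modulus admits a cut-off; this
  description makes closure under lattice and algebra operations evident.\<close>
definition Dcut :: "('x \<Rightarrow> real) set" where
  "Dcut = {f \<in> D. Eset D (\<lambda>x. \<bar>f x\<bar>) \<noteq> {}}"

lemma Dcut_in: "f \<in> Dcut \<Longrightarrow> f \<in> D" unfolding Dcut_def by auto
lemma DcutI: "f \<in> D \<Longrightarrow> \<phi> \<in> Eset D (\<lambda>x. \<bar>f x\<bar>) \<Longrightarrow> f \<in> Dcut" unfolding Dcut_def by auto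

lemma Dcut_support:
  assumes f: "f \<in> Dcut" and g: "g \<in> D" and supp: "\<And>x. g x \<noteq> 0 \<Longrightarrow> f x \<noteq> 0"
  shows "g \<in> Dcut"
proof -
  obtain \<phi> where "\<phi> \<in> Eset D (\<lambda>x. \<bar>f x\<bar>)" using f unfolding Dcut_def by blast
  moreover have "Eset D (\<lambda>x. \<bar>f x\<bar>) \<subseteq> Eset D (\<lambda>x. \<bar>g x\<bar>)" by (rule cutoff_antimono) (use supp in force)
  ultimately show ?thesis using g by (intro DcutI) auto
qed

lemma Dcut_zero: "(\<lambda>x. 0) \<in> Dcut" using zero_cutoff by (intro DcutI zero_in) auto

lemma Dcut_add:
  assumes f: "f \<in> Dcut" and g: "g \<in> Dcut"
  shows "(\<lambda>x. f x + g x) \<in> Dcut"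
proof -
  obtain \<phi> \<psi> where "\<phi> \<in> Eset D (\<lambda>x. \<bar>f x\<bar>)" and "\<psi> \<in> Eset D (\<lambda>x. \<bar>g x\<bar>)"
    using f g unfolding Dcut_def by blast
  hence "(\<lambda>x. max (\<phi> x) (\<psi> x)) \<in> Eset D (\<lambda>x. \<bar>f x\<bar> + \<bar>g x\<bar>)" by (intro cutoff_max) auto
  moreover have "Eset D (\<lambda>x. \<bar>f x\<bar> + \<bar>g x\<bar>) \<subseteq> Eset D (\<lambda>x. \<bar>f x + g x\<bar>)" by (rule cutoff_antimono) auto
  ultimately show ?thesis using add_in[OF Dcut_in[OF f] Dcut_in[OF g]] by (intro DcutI) auto
qed

lemma Dcut_scale: "f \<in> Dcut \<Longrightarrow> (\<lambda>x. c * f x) \<in> Dcut"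
  by (rule Dcut_support) (auto intro: scale_in Dcut_in)
lemma Dcut_mult: "f \<in> Dcut \<Longrightarrow> g \<in> D \<Longrightarrow> (\<lambda>x. f x * g x) \<in> Dcut"
  by (rule Dcut_support) (auto intro: mult_in Dcut_in)
lemma Dcut_pos_part: assumes "f \<in> Dcut" shows "(\<lambda>x. max (f x) 0) \<in> Dcut"
  by (rule Dcut_support[OF assms pos_part_in[OF Dcut_in[OF assms]]]) (auto simp: max_def split: if_splits)
lemma Dcut_neg_part: assumes "f \<in> Dcut" shows "(\<lambda>x. max (- f x) 0) \<in> Dcut"
  by (rule Dcut_support[OF assms neg_part_in[OF Dcut_in[OF assms]]]) (auto simp: max_def split: if_splits)
lemma Dcut_abs: "f \<in> Dcut \<Longrightarrow> (\<lambda>x. \<bar>f x\<bar>) \<in> Dcut"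
  by (rule Dcut_support) (auto intro: abs_in Dcut_in)

lemma Dcut_D0plus: "f \<in> Dcut \<Longrightarrow> (\<And>x. 0 \<le> f x) \<Longrightarrow> f \<in> D0plus D"
  unfolding Dcut_def D0plus_def by (auto simp: abs_of_nonneg)

lemma D0plus_Dcut: "f \<in> D0plus D \<Longrightarrow> f \<in> Dcut"
  unfolding Dcut_def D0plus_def by (auto simp: abs_of_nonneg)

lemma D0_eq_Dcut: "D0 D = Dcut"
proof
  show "D0 D \<subseteq> Dcut"
  proof
    fix f assume "f \<in> D0 D"
    then obtain n :: nat and c :: "nat \<Rightarrow> real" and g :: "nat \<Rightarrow> 'x \<Rightarrow> real"
      where g: "\<forall>i<n. g i \<in> D0plus D" and f: "f = (\<lambda>x. \<Sum>i<n. c i * g i x)"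
      unfolding D0_def mem_Collect_eq by blast
    show "f \<in> Dcut" unfolding f
      by (rule linear_combination_closed[OF Dcut_zero Dcut_add Dcut_scale]) (use g D0plus_Dcut in auto)
  qed
  show "Dcut \<subseteq> D0 D"
  proof
    fix f assume f: "f \<in> Dcut"
    define g where "g = (\<lambda>i::nat. if i = 0 then (\<lambda>x. max (f x) 0) else (\<lambda>x. max (- f x) 0))"
    define c where "c = (\<lambda>i::nat. if i = 0 then (1::real) else -1)"
    have "\<forall>i<2. g i \<in> D0plus D"
      unfolding g_def using Dcut_pos_part[OF f] Dcut_neg_part[OF f] by (auto intro!: Dcut_D0plus)
    moreover have "f = (\<lambda>x. \<Sum>i<2. c i * g i x)"
      by (rule ext) (simp add: g_def c_def eval_nat_numeral max_def)
    ultimately show "f \<in> D0 D" unfolding D0_def by blast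
  qed
qed

abbreviation "K \<equiv> killing D E"

lemma K_eq_Kp: "f \<in> D0plus D \<Longrightarrow> K f = Kp f"
  using D0plusD(2)[of f] Kp_zero unfolding killing_def by (simp add: max_absorb1)

text \<open>Additivity follows from \<open>(f+g)\<^sup>+ + f\<^sup>- + g\<^sup>- = (f+g)\<^sup>- + f\<^sup>+ + g\<^sup>+\<close> and additivity of \<open>Kp\<close>.\<close>
lemma K_add:
  assumes f: "f \<in> Dcut" and g: "g \<in> Dcut"
  shows "K (\<lambda>x. f x + g x) = K f + K g"
proof -
  define P where "P = (\<lambda>x. max (f x + g x) 0)"
  define N where "N = (\<lambda>x. max (- (f x + g x)) 0)"
  define fp where "fp = (\<lambda>x. max (f x) 0)"
  define fn where "fn = (\<lambda>x. max (- f x) 0)"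
  define gp where "gp = (\<lambda>x. max (g x) 0)"
  define gn where "gn = (\<lambda>x. max (- g x) 0)"
  have fg: "(\<lambda>x. f x + g x) \<in> Dcut" using f g by (rule Dcut_add)
  have parts: "P \<in> D0plus D" "N \<in> D0plus D" "fp \<in> D0plus D" "fn \<in> D0plus D" "gp \<in> D0plus D" "gn \<in> D0plus D"
    unfolding P_def N_def fp_def fn_def gp_def gn_def
    using Dcut_pos_part[OF fg] Dcut_neg_part[OF fg] Dcut_pos_part[OF f] Dcut_neg_part[OF f]
      Dcut_pos_part[OF g] Dcut_neg_part[OF g]
    by (auto intro!: Dcut_D0plus)
  have "(\<lambda>x. (P x + fn x) + gn x) = (\<lambda>x. (N x + fp x) + gp x)"
    by (rule ext) (simp add: P_def N_def fp_def fn_def gp_def gn_def max_def)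
  hence "Kp P + Kp fn + Kp gn = Kp N + Kp fp + Kp gp"
    using Kp_add[OF D0plus_add[OF parts(1,4)] parts(6)] Kp_add[OF parts(1,4)]
      Kp_add[OF D0plus_add[OF parts(2,3)] parts(5)] Kp_add[OF parts(2,3)] by simp
  thus ?thesis unfolding killing_def P_def N_def fp_def fn_def gp_def gn_def by simp
qed

lemma K_scale:
  assumes f: "f \<in> Dcut"
  shows "K (\<lambda>x. c * f x) = c * K f"
proof -
  have fp: "(\<lambda>x. max (f x) 0) \<in> D0plus D" and fn: "(\<lambda>x. max (- f x) 0) \<in> D0plus D"
    using Dcut_pos_part[OF f] Dcut_neg_part[OF f] by (auto intro!: Dcut_D0plus)
  have pos: "max (t * y) 0 = t * max y 0" if "t \<ge> 0" for t y :: real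
    using that by (simp add: max_mult_distrib_left)
  show ?thesis
  proof (cases "c \<ge> 0")
    case True
    have "(\<lambda>x. max (c * f x) 0) = (\<lambda>x. c * max (f x) 0)"
      "(\<lambda>x. max (- (c * f x)) 0) = (\<lambda>x. c * max (- f x) 0)"
      using pos[OF True, of "f _"] pos[OF True, of "- f _"] by (auto intro!: ext)
    thus ?thesis unfolding killing_def using Kp_scale[OF fp True] Kp_scale[OF fn True]
      by (simp add: algebra_simps)
  next
    case False
    hence c: "-c \<ge> 0" by simp
    have "(\<lambda>x. max (c * f x) 0) = (\<lambda>x. (-c) * max (- f x) 0)"
      "(\<lambda>x. max (- (c * f x)) 0) = (\<lambda>x. (-c) * max (f x) 0)"
      using pos[OF c, of "f _"] pos[OF c, of "- f _"] by (auto intro!: ext)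
    thus ?thesis unfolding killing_def using Kp_scale[OF fp c] Kp_scale[OF fn c]
      by (simp add: algebra_simps)
  qed
qed

subsection \<open>The inequality \<open>K(f\<^sup>2) \<le> E(f)\<close>\<close>

lemma upper_layer:
  assumes d: "\<delta> > 0" and g: "g \<in> D" and p: "\<psi> \<in> Eset D g"
  shows "(\<lambda>x. g x - min (g x) \<delta>) \<in> D" "\<psi> \<in> Eset D (\<lambda>x. g x - min (g x) \<delta>)"
proof -
  show "(\<lambda>x. g x - min (g x) \<delta>) \<in> D" using g min_const_in[OF g d] by (rule diff_in)
  have "Eset D g \<subseteq> Eset D (\<lambda>x. g x - min (g x) \<delta>)"
    by (rule cutoff_antimono) (use d in \<open>auto simp: min_def split: if_splits\<close>)
  thus "\<psi> \<in> Eset D (\<lambda>x. g x - min (g x) \<delta>)" using p by blast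
qed

text \<open>Peeling off the bottom layer \<open>a = min g \<delta>\<close> of \<open>g \<ge> 0\<close>, with remainder \<open>b = g - a\<close>:
  since \<open>g\<^sup>2 = a\<^sup>2 + 2\<delta> b + b\<^sup>2\<close>, \<open>a\<^sup>2 \<le> \<delta> a\<close> and \<open>a/\<delta>\<close> is a cut-off of \<open>b\<close>, the killing of \<open>g\<^sup>2\<close>
  is controlled by that of \<open>b\<^sup>2\<close> plus energies of \<open>a\<close>.\<close>
lemma Kp_square_peel:
  assumes d: "\<delta> > 0" and g: "g \<in> D" and g0: "\<And>x. 0 \<le> g x" and p: "\<psi> \<in> Eset D g"
  defines "a \<equiv> \<lambda>x. min (g x) \<delta>" and "b \<equiv> \<lambda>x. g x - min (g x) \<delta>"
  shows "Kp (\<lambda>x. (g x)^2) \<le> \<delta> * E a \<psi> + 2 * E a b + Kp (\<lambda>x. (b x)^2)"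
proof -
  have aD: "a \<in> D" unfolding a_def using g d by (rule min_const_in)
  have bD: "b \<in> D" and pb: "\<psi> \<in> Eset D b" unfolding b_def using upper_layer[OF d g p] by auto
  have a0: "\<And>x. 0 \<le> a x" and a_le: "\<And>x. a x \<le> \<delta>" and b0: "\<And>x. 0 \<le> b x"
    using g0 d by (auto simp: a_def b_def)
  have pa: "\<psi> \<in> Eset D a" using p cutoff_antimono[of a g] by (auto simp: a_def)
  have ab: "(\<lambda>x. (1/\<delta>) * a x) \<in> Eset D b"
    using a0 a_le d by (intro cutoffI scale_in[OF aD]) (auto simp: a_def b_def min_def field_simps)
  have aP: "a \<in> D0plus D" using aD a0 pa by (rule D0plusI)
  have bP: "b \<in> D0plus D" using bD b0 pb by (rule D0plusI)
  have a2: "(\<lambda>x. (a x)^2) \<in> D0plus D"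
    by (rule D0plusI[OF square_in[OF aD] _ subsetD[OF cutoff_antimono pa]])
      (use a0 in \<open>force simp: zero_less_power2 less_le\<close>)+
  have b2: "(\<lambda>x. (b x)^2) \<in> D0plus D"
    by (rule D0plusI[OF square_in[OF bD] _ subsetD[OF cutoff_antimono pb]])
      (use b0 in \<open>force simp: zero_less_power2 less_le\<close>)+
  have b2d: "(\<lambda>x. (2*\<delta>) * b x) \<in> D0plus D" using bP d by (intro D0plus_scale) auto
  have "(\<lambda>x. (g x)^2) = (\<lambda>x. (a x)^2 + ((2*\<delta>) * b x + (b x)^2))"
    by (rule ext) (auto simp: a_def b_def min_def power2_eq_square algebra_simps)
  hence "Kp (\<lambda>x. (g x)^2) = Kp (\<lambda>x. (a x)^2) + (Kp (\<lambda>x. (2*\<delta>) * b x) + Kp (\<lambda>x. (b x)^2))"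
    using Kp_add[OF a2 D0plus_add[OF b2d b2]] Kp_add[OF b2d b2] by simp
  also have "Kp (\<lambda>x. (a x)^2) \<le> Kp (\<lambda>x. \<delta> * a x)"
    using a0 a_le d by (intro Kp_mono a2 D0plus_scale aP) (auto simp: power2_eq_square intro: mult_right_mono)
  also have "Kp (\<lambda>x. \<delta> * a x) = \<delta> * Kp a" using aP d by (intro Kp_scale) auto
  also have "Kp a \<le> E a \<psi>" using aD a0 pa by (rule Kp_le)
  also have "Kp (\<lambda>x. (2*\<delta>) * b x) = (2*\<delta>) * Kp b" using bP d by (intro Kp_scale) auto
  also have "Kp b \<le> E b (\<lambda>x. (1/\<delta>) * a x)" using bD b0 ab by (rule Kp_le)
  also have "E b (\<lambda>x. (1/\<delta>) * a x) = (1/\<delta>) * E a b"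
    using E_scale_right[OF aD bD, of "1/\<delta>"] E_sym[OF aD bD] by simp
  finally show ?thesis using d by (simp add: mult_left_mono field_simps)
qed

text \<open>Induction on the number \<open>N\<close> of layers of height \<open>\<delta>\<close> needed to exhaust \<open>g\<close>:
  the error term \<open>\<delta> E(g,\<psi>)\<close> collects the contributions of the bottom layers.\<close>
lemma Kp_square_layers:
  assumes d: "\<delta> > 0"
  shows "g \<in> D \<Longrightarrow> (\<And>x. 0 \<le> g x) \<Longrightarrow> \<psi> \<in> Eset D g \<Longrightarrow> (\<And>x. g x \<le> real N * \<delta>)
    \<Longrightarrow> Kp (\<lambda>x. (g x)^2) \<le> E g g + \<delta> * E g \<psi>"
proof (induction N arbitrary: g)
  case 0
  hence "g = (\<lambda>x. 0)" by (intro ext) (simp add: order_antisym)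
  thus ?case using Kp_zero E_zero[OF zero_in] E_zero[OF cutoffD(1)[OF "0.prems"(3)]] by simp
next
  case (Suc N)
  define a where "a = (\<lambda>x. min (g x) \<delta>)"
  define b where "b = (\<lambda>x. g x - min (g x) \<delta>)"
  have aD: "a \<in> D" unfolding a_def using Suc.prems(1) d by (rule min_const_in)
  have bD: "b \<in> D" and pb: "\<psi> \<in> Eset D b"
    unfolding b_def using upper_layer[OF d Suc.prems(1,3)] by auto
  have "\<And>x. b x \<le> real N * \<delta>"
    using Suc.prems(4) d by (auto simp: b_def min_def algebra_simps)
  hence IH: "Kp (\<lambda>x. (b x)^2) \<le> E b b + \<delta> * E b \<psi>"
    using Suc.IH[OF bD _ pb] by (simp add: b_def)
  have g_split: "g = (\<lambda>x. a x + 1 * b x)" by (simp add: a_def b_def)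
  have "E g g = E a a + 2 * E a b + E b b" using E_expand[OF aD bD, of 1] g_split by simp
  moreover have "E g \<psi> = E a \<psi> + E b \<psi>"
    using E_add[OF aD bD cutoffD(1)[OF Suc.prems(3)]] g_split by simp
  moreover have "0 \<le> E a a" using aD by (rule E_nonneg)
  ultimately show ?case
    using Kp_square_peel[OF d Suc.prems(1-3)] IH d unfolding a_def b_def
    by (simp add: algebra_simps)
qed

text \<open>Letting the layer height tend to 0 (\<open>g\<close> is bounded, so finitely many layers suffice).\<close>
lemma Kp_square_le:
  assumes g: "g \<in> D0plus D"
  shows "Kp (\<lambda>x. (g x)^2) \<le> E g g"
proof -
  obtain \<psi> where p: "\<psi> \<in> Eset D g" using D0plusD(3)[OF g] by blast
  obtain C where C: "\<And>x. \<bar>g x\<bar> \<le> C" using bounded_fun[OF D0plusD(1)[OF g]] by blast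
  show ?thesis
  proof (rule le_of_le_plus_multiple)
    fix \<delta> :: real assume d: "\<delta> > 0"
    define N where "N = nat \<lceil>C / \<delta>\<rceil>"
    have "C / \<delta> \<le> real N" unfolding N_def by linarith
    hence "C \<le> real N * \<delta>" using d by (simp add: field_simps)
    hence "\<And>x. g x \<le> real N * \<delta>" using C by (smt (verit) abs_ge_self)
    thus "Kp (\<lambda>x. (g x)^2) \<le> E g g + \<delta> * E g \<psi>"
      using Kp_square_layers[OF d] D0plusD[OF g] p by blast
  qed
qed

lemma K_square_le:
  assumes f: "f \<in> Dcut"
  shows "K (\<lambda>x. (f x)^2) \<le> E f f"
proof -
  have abs_f: "(\<lambda>x. \<bar>f x\<bar>) \<in> D0plus D" using Dcut_abs[OF f] by (rule Dcut_D0plus) auto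
  have "(\<lambda>x. (f x)^2) \<in> D0plus D"
    using Dcut_support[OF f square_in[OF Dcut_in[OF f]]] by (intro Dcut_D0plus) auto
  hence "K (\<lambda>x. (f x)^2) = Kp (\<lambda>x. (\<bar>f x\<bar>)^2)" by (simp add: K_eq_Kp)
  also have "\<dots> \<le> E (\<lambda>x. \<bar>f x\<bar>) (\<lambda>x. \<bar>f x\<bar>)" using abs_f by (rule Kp_square_le)
  also have "\<dots> \<le> E f f" using Dcut_in[OF f] by (rule E_abs_le)
  finally show ?thesis .
qed

subsection \<open>The form \<open>Q\<close>\<close>

definition Q :: "('x \<Rightarrow> real) \<Rightarrow> ('x \<Rightarrow> real) \<Rightarrow> real" where
  "Q f g = E f g - K (\<lambda>x. f x * g x)"

lemma Q_bilinear: "bilinear_form Dcut Q"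
  unfolding bilinear_form_def
proof (intro conjI ballI allI)
  fix f g h assume f: "f \<in> Dcut" and g: "g \<in> Dcut" and h: "h \<in> Dcut"
  have "(\<lambda>x. (f x + g x) * h x) = (\<lambda>x. f x * h x + g x * h x)" by (simp add: algebra_simps)
  hence "K (\<lambda>x. (f x + g x) * h x) = K (\<lambda>x. f x * h x) + K (\<lambda>x. g x * h x)"
    using K_add[OF Dcut_mult[OF f Dcut_in[OF h]] Dcut_mult[OF g Dcut_in[OF h]]] by simp
  thus "Q (\<lambda>x. f x + g x) h = Q f h + Q g h"
    unfolding Q_def using E_add[OF Dcut_in[OF f] Dcut_in[OF g] Dcut_in[OF h]] by simp
next
  fix f g and c :: real assume f: "f \<in> Dcut" and g: "g \<in> Dcut"
  have "K (\<lambda>x. c * f x * g x) = c * K (\<lambda>x. f x * g x)"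
    using K_scale[OF Dcut_mult[OF f Dcut_in[OF g]]] by (simp add: mult.assoc)
  thus "Q (\<lambda>x. c * f x) g = c * Q f g"
    unfolding Q_def using E_scale[OF Dcut_in[OF f] Dcut_in[OF g]] by (simp add: algebra_simps)
next
  fix f g assume "f \<in> Dcut" "g \<in> Dcut"
  thus "Q f g = Q g f" unfolding Q_def using E_sym[OF Dcut_in Dcut_in] by (simp add: mult.commute)
next
  fix f assume "f \<in> Dcut"
  thus "0 \<le> Q f f" unfolding Q_def using K_square_le by (simp add: power2_eq_square)
qed

text \<open>Write \<open>f = a + b - n\<close> with \<open>a = T1 f\<close>,
  \<open>b = f\<^sup>+ - a\<close>, \<open>n = f\<^sup>-\<close>; then \<open>f\<^sup>2 = a\<^sup>2 + 2b + b\<^sup>2 + n\<^sup>2\<close>, and \<open>Q(f) - Q(a)\<close> splits into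
  \<open>2(E(a,b) - K b)\<close>, \<open>-2E(a,n) - 2E(b,n)\<close>, \<open>E(b) - K(b\<^sup>2)\<close>, \<open>E(n) - K(n\<^sup>2)\<close>, all nonnegative
  (\<open>a\<close> is a cut-off of \<open>b\<close>, \<open>n\<close> is disjoint from \<open>a\<close> and \<open>b\<close>, and \<open>K_square_le\<close>).\<close>
lemma Q_T1_le:
  assumes f: "f \<in> Dcut"
  shows "Q (\<lambda>x. T1 (f x)) (\<lambda>x. T1 (f x)) \<le> Q f f"
proof -
  have fD: "f \<in> D" using f by (rule Dcut_in)
  define a where "a = (\<lambda>x. T1 (f x))"
  define n where "n = (\<lambda>x. max (- f x) 0)"
  define b where "b = (\<lambda>x. max (f x) 0 - a x)"
  note defs = a_def b_def n_def T1_def max_def min_def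
  have aD: "a \<in> D" and nD: "n \<in> D" and bD: "b \<in> D"
    unfolding a_def n_def b_def using fD by (auto intro: T1_in neg_part_in diff_in pos_part_in)
  have aZ: "a \<in> Dcut" by (rule Dcut_support[OF f aD]) (auto simp: defs)
  have nZ: "n \<in> Dcut" by (rule Dcut_support[OF f nD]) (auto simp: defs split: if_splits)
  have bZ: "b \<in> Dcut" by (rule Dcut_support[OF f bD]) (auto simp: defs split: if_splits)
  have a01: "\<And>x. 0 \<le> a x \<and> a x \<le> 1" and n0: "\<And>x. 0 \<le> n x" and b0: "\<And>x. 0 \<le> b x"
    by (auto simp: defs)
  have "f = (\<lambda>x. a x + (b x - n x))" by (rule ext) (auto simp: defs)
  hence "E f f = E a a + 2 * (E a b - E a n) + (E b b - 2 * E b n + E n n)"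
    using E_expand3[OF aD bD nD] by simp
  moreover have "K (\<lambda>x. f x * f x) = K (\<lambda>x. a x * a x) + (2 * K b + (K (\<lambda>x. b x * b x) + K (\<lambda>x. n x * n x)))"
  proof -
    have "(\<lambda>x. f x * f x) = (\<lambda>x. a x * a x + (2 * b x + (b x * b x + n x * n x)))"
      by (rule ext) (auto simp: defs algebra_simps)
    thus ?thesis using K_add[OF Dcut_mult[OF aZ aD] Dcut_add[OF Dcut_scale[OF bZ] Dcut_add]]
        K_add[OF Dcut_scale[OF bZ] Dcut_add] K_add[OF Dcut_mult[OF bZ bD] Dcut_mult[OF nZ nD]]
        K_scale[OF bZ, of 2] Dcut_mult[OF bZ bD] Dcut_mult[OF nZ nD] by simp
  qed
  moreover have "K b \<le> E a b"
  proof -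
    have "a \<in> Eset D b" using aD a01 by (intro cutoffI) (auto simp: defs split: if_splits)
    thus ?thesis using K_eq_Kp[OF D0plusI[OF bD b0]] Kp_le[OF bD b0] E_sym[OF aD bD] by simp
  qed
  moreover have "E a n \<le> 0" using aD nD a01 n0 by (rule E_disjoint_unit) (auto simp: defs split: if_splits)
  moreover have "E b n \<le> 0" using bD nD b0 n0 by (rule E_disjoint) (auto simp: defs split: if_splits)
  moreover have "K (\<lambda>x. b x * b x) \<le> E b b" "K (\<lambda>x. n x * n x) \<le> E n n"
    using K_square_le[OF bZ] K_square_le[OF nZ] by (simp_all add: power2_eq_square)
  ultimately have "Q a a \<le> Q f f" unfolding Q_def by simp
  thus ?thesis by (simp add: a_def)
qed

lemma Q_unit_contraction: "unit_contraction_operates Dcut Q"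
  unfolding unit_contraction_operates_def
proof (intro ballI conjI)
  fix f assume f: "f \<in> Dcut"
  show "(\<lambda>x. T1 (f x)) \<in> Dcut" by (rule Dcut_support[OF f T1_in[OF Dcut_in[OF f]]]) (auto simp: T1_def)
  show "Q (\<lambda>x. T1 (f x)) (\<lambda>x. T1 (f x)) \<le> Q f f" using f by (rule Q_T1_le)
qed

text \<open>Cut-offs inside \<open>Dcut\<close> still approximate \<open>Kp g\<close>: for a cut-off \<open>\<psi>\<close>, the function
  \<open>\<phi> = 2\<psi> - min(2\<psi>,1)\<close> is again a cut-off of \<open>g\<close>, has the cut-off \<open>min(2\<psi>,1)\<close> itself,
  and \<open>E(g,\<phi>) \<le> 2 E(g,\<psi>) - Kp g\<close>.\<close>
lemma Dcut_cutoff_approx: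
  assumes g: "g \<in> D0plus D" and eta: "\<eta> > 0"
  shows "\<exists>\<phi>\<in>Eset Dcut g. E g \<phi> < Kp g + \<eta>"
proof -
  note g' = D0plusD[OF g]
  obtain \<psi> where p: "\<psi> \<in> Eset D g" and close: "E g \<psi> < Kp g + \<eta>/2"
    using Kp_approx[OF g'(3)] eta by (meson half_gt_zero)
  note p' = cutoffD[OF p]
  define \<chi> where "\<chi> = (\<lambda>x. min (2 * \<psi> x) 1)"
  define \<phi> where "\<phi> = (\<lambda>x. 2 * \<psi> x - \<chi> x)"
  have 2: "(\<lambda>x. 2 * \<psi> x) \<in> D" using p'(1) by (rule scale_in)
  have cD: "\<chi> \<in> D" unfolding \<chi>_def using 2 by (rule stone_in)
  have phD: "\<phi> \<in> D" unfolding \<phi>_def using 2 cD by (rule diff_in)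
  have cg: "\<chi> \<in> Eset D g" using cD p' by (intro cutoffI) (auto simp: \<chi>_def)
  have "\<chi> \<in> Eset D (\<lambda>x. \<bar>\<phi> x\<bar>)" using cD p' by (intro cutoffI) (auto simp: \<chi>_def \<phi>_def min_def)
  hence "\<phi> \<in> Dcut" using phD by (intro DcutI)
  hence ph: "\<phi> \<in> Eset Dcut g" unfolding Eset_def using p'(2-4) by (auto simp: \<phi>_def \<chi>_def min_def)
  have "E g \<phi> = 2 * E g \<psi> - E g \<chi>"
    unfolding \<phi>_def using E_diff_right[OF 2 cD g'(1)] E_scale_right[OF p'(1) g'(1)] by simp
  moreover have "Kp g \<le> E g \<chi>" using g'(1,2) cg by (rule Kp_le)
  ultimately have "E g \<phi> < Kp g + \<eta>" using close by simp
  thus ?thesis using ph by blast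
qed

text \<open>For \<open>g \<ge> 0\<close> and a cut-off \<open>\<phi>\<close> of \<open>g\<close> we have \<open>g \<phi> = g\<close>, so \<open>Q(g,\<phi>) = E(g,\<phi>) - Kp g\<close>,
  whose infimum over cut-offs in \<open>Dcut\<close> is 0 by the preceding lemma.\<close>
lemma Q_killing_plus_zero:
  assumes g: "g \<in> Dcut" and g0: "\<And>x. 0 \<le> g x"
  shows "killing_plus Dcut Q g = 0"
  unfolding killing_plus_def
proof (rule cInf_eq_non_empty)
  have gP: "g \<in> D0plus D" using g g0 by (rule Dcut_D0plus)
  have cut_D: "\<phi> \<in> Eset D g" if "\<phi> \<in> Eset Dcut g" for \<phi>
    using that Dcut_in unfolding Eset_def by auto
  have Q_eq: "Q g \<phi> = E g \<phi> - Kp g" if "\<phi> \<in> Eset Dcut g" for \<phi>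
  proof -
    have "(\<lambda>x. g x * \<phi> x) = g"
    proof
      fix x show "g x * \<phi> x = g x"
        using cutoffD(4)[OF cut_D[OF that], of x] g0[of x] by (cases "g x > 0") auto
    qed
    thus ?thesis unfolding Q_def using K_eq_Kp[OF gP] by simp
  qed
  show "(\<lambda>\<phi>. Q g \<phi>) ` Eset Dcut g \<noteq> {}" using Dcut_cutoff_approx[OF gP, of 1] by auto
  show "0 \<le> s" if "s \<in> (\<lambda>\<phi>. Q g \<phi>) ` Eset Dcut g" for s
    using that Q_eq Kp_le[OF D0plusD(1,2)[OF gP] cut_D] by auto
  show "y \<le> 0" if lower: "\<And>s. s \<in> (\<lambda>\<phi>. Q g \<phi>) ` Eset Dcut g \<Longrightarrow> y \<le> s" for y
  proof (rule ccontr)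
    assume "\<not> y \<le> 0"
    then obtain \<phi> where "\<phi> \<in> Eset Dcut g" "E g \<phi> < Kp g + y" using Dcut_cutoff_approx[OF gP, of y] by auto
    thus False using lower[of "Q g \<phi>"] Q_eq by force
  qed
qed

lemma D0_Dcut_subset: "D0 Dcut \<subseteq> Dcut"
proof
  fix f assume "f \<in> D0 Dcut"
  then obtain n :: nat and c :: "nat \<Rightarrow> real" and g :: "nat \<Rightarrow> 'x \<Rightarrow> real"
    where g: "\<forall>i<n. g i \<in> D0plus Dcut" and f: "f = (\<lambda>x. \<Sum>i<n. c i * g i x)"
    unfolding D0_def mem_Collect_eq by blast
  show "f \<in> Dcut" unfolding f
    by (rule linear_combination_closed[OF Dcut_zero Dcut_add Dcut_scale]) (use g in \<open>auto simp: D0plus_def\<close>)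
qed

lemma Q_zero_killing: "f \<in> D0 Dcut \<Longrightarrow> killing Dcut Q f = 0"
  using D0_Dcut_subset Q_killing_plus_zero[OF Dcut_pos_part] Q_killing_plus_zero[OF Dcut_neg_part]
  unfolding killing_def by auto

end

theorem propositionP:
  fixes D :: "('x \<Rightarrow> real) set"
    and E :: "('x \<Rightarrow> real) \<Rightarrow> ('x \<Rightarrow> real) \<Rightarrow> real"
  assumes "algebra_vector_lattice D"
    and "bounded_functions D"
    and "stone_property D"
    and "bilinear_form D E"
    and "unit_contraction_operates D E"
  shows "(\<forall>f\<in>D0 D. killing D E (\<lambda>x. (f x)\<^sup>2) \<le> E f f) \<and>
         (let Q = (\<lambda>f g. E f g - killing D E (\<lambda>x. f x * g x)) in
            bilinear_form (D0 D) Q \<and>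
            unit_contraction_operates (D0 D) Q \<and>
            (\<forall>f\<in>D0 (D0 D). killing (D0 D) Q f = 0))"
proof -
  interpret contraction_form D E using assms by unfold_locales
  have "(\<lambda>f g. E f g - killing D E (\<lambda>x. f x * g x)) = Q" by (simp add: Q_def fun_eq_iff)
  thus ?thesis
    unfolding Let_def D0_eq_Dcut
    using K_square_le Q_bilinear Q_unit_contraction Q_zero_killing by auto
qed

end
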